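(* Let $n\ge2$ and let $z_1,\dots,z_n$ be indeterminates. For all integers $m,k\ge0$, \[ E(n)_{m+1,m+k+1}=\sum_{i=0}^{m}\binom{m}{i}\frac{(m+k)!}{(i+k)!}\,M(m+1-i,\,k+2i,\,n). \]
   Context: For distinct $i,j\in\{1,\dots,n\}$ and $m\ge0$, $e^{(i,j)}_m$ is the elementary symmetric polynomial of degree $m$ in the variables $\{z_l:l\ne i,j\}$ ($e^{(i,j)}_0=1$, and $0$ if $m>n-2$). $E(n)$ is the infinite matrix with entries $E(n)_{r,s}=(r-1)!(s-1)!\sum_{1\le i<j\le n}e^{(i,j)}_{r-1}e^{(i,j)}_{s-1}(z_i-z_j)^2$ for $r,s\ge1$. For $m_2\ge1$, $m_1\ge0$, with $N=m_1+m_2+1$ and sums over all $N$-tuples $(b_1,\dots,b_N)$ of pairwise distinct elements of $\{1,\dots,n\}$, \[ M(m_2,m_1,n)=\sum_{b} z_{b_1}^2\cdots z_{b_{m_2}}^2\,z_{b_{m_2+1}}\cdots z_{b_{m_2+m_1}}\;-\;\sum_{b} z_{b_1}^2\cdots z_{b_{m_2-1}}^2\,z_{b_{m_2}}z_{b_{m_2+1}}\cdots z_{b_{m_2+m_1+1}}. \] *)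

theory Defs
  imports Main
begin

text \<open>Polynomial identities in the indeterminates z_1..z_n are rendered as identities
of their evaluations at an arbitrary point z :: nat => 'a of an arbitrary commutative ring
(only the values z 1, ..., z n matter).\<close>

definition esym_excl :: "nat \<Rightarrow> nat \<Rightarrow> nat \<Rightarrow> nat \<Rightarrow> (nat \<Rightarrow> 'a::comm_ring_1) \<Rightarrow> 'a" where
  "esym_excl n i j m z =
     (\<Sum>S\<in>{S. S \<subseteq> {1..n} - {i, j} \<and> card S = m}. \<Prod>l\<in>S. z l)"

definition E_entry :: "nat \<Rightarrow> nat \<Rightarrow> nat \<Rightarrow> (nat \<Rightarrow> 'a::comm_ring_1) \<Rightarrow> 'a" where
  "E_entry n r s z =
     of_nat (fact (r - 1) * fact (s - 1)) *
     (\<Sum>i\<in>{1..n}. \<Sum>j\<in>{i<..n}.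
        esym_excl n i j (r - 1) z * esym_excl n i j (s - 1) z * (z i - z j)^2)"

text \<open>N-tuples (b_1,...,b_N) of pairwise distinct elements of {1..n}, as lists
(b_p is the list entry at index p-1).\<close>
definition dtuples :: "nat \<Rightarrow> nat \<Rightarrow> nat list set" where
  "dtuples N n = {bs. length bs = N \<and> distinct bs \<and> set bs \<subseteq> {1..n}}"

definition M_poly :: "nat \<Rightarrow> nat \<Rightarrow> nat \<Rightarrow> (nat \<Rightarrow> 'a::comm_ring_1) \<Rightarrow> 'a" where
  "M_poly m2 m1 n z =
     (\<Sum>bs\<in>dtuples (m1 + m2 + 1) n.
        (\<Prod>p<m2. z (bs ! p) ^ 2) * (\<Prod>p\<in>{m2..<m2 + m1}. z (bs ! p)))
   - (\<Sum>bs\<in>dtuples (m1 + m2 + 1) n.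
        (\<Prod>p<m2 - 1. z (bs ! p) ^ 2) * (\<Prod>p\<in>{m2 - 1..<m2 + m1 + 1}. z (bs ! p)))"

end

(*
  Both sides are expanded in the monomial symmetric polynomials m_(2^a,1^c), i.e. sums of
  prod_{l in A} z_l^2 * prod_{l in C} z_l over disjoint index sets A, C with |A| = a, |C| = c.

  On the left, (z_i - z_j)^2 is symmetrised to z_i^2 - z_i z_j over ordered pairs i ~= j.  The
  product e_r e_(r+k) of elementary symmetric polynomials is a sum over pairs of index sets
  (S, T); grouping them by A = S Int T and C = S - T Un T - S shows that m_(2^(r-i),1^(k+2i))
  occurs with multiplicity binomial(k+2i, i), the number of ways to choose S - T inside C.
  Multiplying by z_i^2 (resp. z_i z_j) and summing over the excluded pair i, j is a double count
  that raises a (resp. c by 2).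

  On the right, a sum over tuples of distinct indices counts every monomial a! c! times, times
  the n - a - c possible values of a trailing unused index.  After this, the identity reduces to
  the factorial identity m! (m+k)! binomial(k+2i, i) = binomial(m, i) (m+k)!/(i+k)! (m-i)! (k+2i)!.
*)
theory Submission
  imports Defs "HOL-Combinatorics.Multiset_Permutations"
begin

lemma sum_comp_eq_sum_card_fibres:
  assumes "finite X" "finite Y" "\<phi> ` X \<subseteq> Y"
  shows "(\<Sum>x\<in>X. w (\<phi> x)) = (\<Sum>y\<in>Y. of_nat (card {x \<in> X. \<phi> x = y}) * (w y :: 'a::comm_ring_1))"
proof -
  have "(\<Sum>x\<in>X. w (\<phi> x)) = (\<Sum>y\<in>Y. \<Sum>x\<in>{x \<in> X. \<phi> x = y}. w (\<phi> x))"
    by (rule sum.group[OF assms, symmetric])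
  also have "\<dots> = (\<Sum>y\<in>Y. \<Sum>x\<in>{x \<in> X. \<phi> x = y}. w y)"
    by (intro sum.cong) auto
  finally show ?thesis
    by simp
qed

lemma sum_distinct_pairs_eq_sum_less_pairs:
  fixes V :: "'b::linorder set"
  assumes "finite V"
  shows "(\<Sum>u\<in>V. \<Sum>v\<in>V - {u}. F u v) = (\<Sum>u\<in>V. \<Sum>v\<in>{v \<in> V. u < v}. F u v + F v u)"
proof -
  have "(\<Sum>v\<in>V - {u}. F u v) = (\<Sum>v\<in>{v \<in> V. u < v} \<union> {v \<in> V. v < u}. F u v)" for u
    by (rule sum.cong) auto
  also have "\<dots> u = (\<Sum>v\<in>{v \<in> V. u < v}. F u v) + (\<Sum>v\<in>{v \<in> V. v < u}. F u v)" for u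
    by (rule sum.union_disjoint) (use assms in auto)
  finally have "(\<Sum>u\<in>V. \<Sum>v\<in>V - {u}. F u v)
      = (\<Sum>u\<in>V. \<Sum>v\<in>{v \<in> V. u < v}. F u v) + (\<Sum>u\<in>V. \<Sum>v\<in>{v \<in> V. v < u}. F u v)"
    by (simp add: sum.distrib)
  also have "(\<Sum>u\<in>V. \<Sum>v\<in>{v \<in> V. v < u}. F u v) = (\<Sum>v\<in>V. \<Sum>u\<in>{u \<in> V. v < u}. F u v)"
    by (rule sum.swap_restrict[OF assms assms])
  finally show ?thesis
    by (simp add: sum.distrib)
qed

lemma prod_nth_eq_prod_set_take:
  assumes "distinct xs" "l \<le> length xs"
  shows "(\<Prod>p<l. f (xs ! p)) = (\<Prod>x\<in>set (take l xs). f x)"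
proof -
  have "set (take l xs) = (!) xs ` {..<l}"
    using nth_image[OF assms(2)] by (simp add: atLeast0LessThan)
  moreover have "inj_on ((!) xs) {..<l}"
    using assms by (intro inj_on_nth) auto
  ultimately show ?thesis
    by (simp add: prod.reindex)
qed

section \<open>Elementary and monomial symmetric polynomials\<close>

definition esym :: "'b set \<Rightarrow> nat \<Rightarrow> ('b \<Rightarrow> 'a::comm_ring_1) \<Rightarrow> 'a" where
  "esym V r z = (\<Sum>S\<in>{S. S \<subseteq> V \<and> card S = r}. \<Prod>l\<in>S. z l)"

definition disjoint_pairs :: "'b set \<Rightarrow> nat \<Rightarrow> nat \<Rightarrow> ('b set \<times> 'b set) set" where
  "disjoint_pairs V a c =
     {(A, C). A \<subseteq> V \<and> C \<subseteq> V \<and> A \<inter> C = {} \<and> card A = a \<and> card C = c}"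

definition pair_monomial :: "('b \<Rightarrow> 'a::comm_ring_1) \<Rightarrow> 'b set \<times> 'b set \<Rightarrow> 'a" where
  "pair_monomial z p = (\<Prod>l\<in>fst p. z l ^ 2) * (\<Prod>l\<in>snd p. z l)"

definition monomial_sym :: "'b set \<Rightarrow> nat \<Rightarrow> nat \<Rightarrow> ('b \<Rightarrow> 'a::comm_ring_1) \<Rightarrow> 'a" where
  "monomial_sym V a c z = (\<Sum>p\<in>disjoint_pairs V a c. pair_monomial z p)"

text \<open>Up to the factor t! c!, this is M(t + 1, c, n) for V = {1..n}; see M_poly_eq_M_reduced.\<close>
definition M_reduced :: "'b set \<Rightarrow> nat \<Rightarrow> nat \<Rightarrow> ('b \<Rightarrow> 'a::comm_ring_1) \<Rightarrow> 'a" where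
  "M_reduced V t c z =
     of_nat ((card V - 1 - t - c) * (t + 1)) * monomial_sym V (t + 1) c z
     - of_nat ((c + 1) * (c + 2)) * monomial_sym V t (c + 2) z"

lemma esym_excl_eq_esym: "esym_excl n i j m z = esym ({1..n} - {i, j}) m z"
  by (simp add: esym_excl_def esym_def)

lemma finite_disjoint_pairs: "finite V \<Longrightarrow> finite (disjoint_pairs V a c)"
  by (rule finite_subset[of _ "Pow V \<times> Pow V"]) (auto simp: disjoint_pairs_def)

lemma sum_disjoint_pairs_swap:
  "(\<Sum>p\<in>disjoint_pairs V a c. f p) = (\<Sum>p\<in>disjoint_pairs V c a. f (prod.swap p))"
proof -
  have "disjoint_pairs V a c = prod.swap ` disjoint_pairs V c a"
    by (force simp: disjoint_pairs_def)
  then show ?thesis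
    by (simp add: sum.reindex)
qed

lemma sum_disjoint_pairs_remove:
  assumes "finite V"
  shows "(\<Sum>u\<in>V. \<Sum>p\<in>disjoint_pairs (V - {u}) a c. f p)
       = of_nat (card V - a - c) * (\<Sum>p\<in>disjoint_pairs V a c. (f p :: 'a::comm_ring_1))"
proof -
  have "(\<Sum>u\<in>V. \<Sum>p\<in>disjoint_pairs (V - {u}) a c. f p)
      = (\<Sum>u\<in>V. \<Sum>p\<in>{p \<in> disjoint_pairs V a c. u \<notin> fst p \<union> snd p}. f p)"
    by (intro sum.cong refl arg_cong[where f = "\<lambda>D. sum f D"]) (auto simp: disjoint_pairs_def)
  also have "\<dots> = (\<Sum>p\<in>disjoint_pairs V a c. \<Sum>u\<in>{u \<in> V. u \<notin> fst p \<union> snd p}. f p)"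
    by (rule sum.swap_restrict) (simp_all add: assms finite_disjoint_pairs)
  also have "\<dots> = (\<Sum>p\<in>disjoint_pairs V a c. of_nat (card V - a - c) * f p)"
  proof (intro sum.cong refl)
    fix p assume p: "p \<in> disjoint_pairs V a c"
    then have "fst p \<union> snd p \<subseteq> V" "card (fst p \<union> snd p) = a + c"
      using assms by (auto simp: disjoint_pairs_def card_Un_disjoint finite_subset)
    moreover have "{u \<in> V. u \<notin> fst p \<union> snd p} = V - (fst p \<union> snd p)"
      by blast
    ultimately have "card {u \<in> V. u \<notin> fst p \<union> snd p} = card V - a - c"
      using assms card_Diff_subset[of "fst p \<union> snd p" V] by (simp add: finite_subset[OF _ assms])
    then show "(\<Sum>u\<in>{u \<in> V. u \<notin> fst p \<union> snd p}. f p) = of_nat (card V - a - c) * f p"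
      by simp
  qed
  finally show ?thesis
    by (simp add: sum_distrib_left)
qed

lemma sum_disjoint_pairs_insert_fst:
  assumes "finite V"
  shows "(\<Sum>u\<in>V. \<Sum>p\<in>disjoint_pairs (V - {u}) a c. f (insert u (fst p), snd p))
       = of_nat (a + 1) * (\<Sum>p\<in>disjoint_pairs V (a + 1) c. (f p :: 'a::comm_ring_1))"
proof -
  have "(\<Sum>p\<in>disjoint_pairs (V - {u}) a c. f (insert u (fst p), snd p))
      = (\<Sum>p\<in>{p \<in> disjoint_pairs V (a + 1) c. u \<in> fst p}. f p)" if u: "u \<in> V" for u
  proof (rule sum.reindex_bij_witness[where i = "\<lambda>p. (fst p - {u}, snd p)"
                                        and j = "\<lambda>p. (insert u (fst p), snd p)"])
    fix p assume "p \<in> {p \<in> disjoint_pairs V (a + 1) c. u \<in> fst p}"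
    then show "(fst p - {u}, snd p) \<in> disjoint_pairs (V - {u}) a c"
      using assms by (auto simp: disjoint_pairs_def finite_subset)
  next
    fix p assume p: "p \<in> disjoint_pairs (V - {u}) a c"
    then have "finite (fst p)" "u \<notin> fst p"
      using assms by (auto simp: disjoint_pairs_def finite_subset)
    with p u show "(insert u (fst p), snd p) \<in> {p \<in> disjoint_pairs V (a + 1) c. u \<in> fst p}"
      by (auto simp: disjoint_pairs_def)
  qed (auto simp: disjoint_pairs_def insert_absorb)
  then have "(\<Sum>u\<in>V. \<Sum>p\<in>disjoint_pairs (V - {u}) a c. f (insert u (fst p), snd p))
      = (\<Sum>u\<in>V. \<Sum>p\<in>{p \<in> disjoint_pairs V (a + 1) c. u \<in> fst p}. f p)"
    by simp
  also have "\<dots> = (\<Sum>p\<in>disjoint_pairs V (a + 1) c. \<Sum>u\<in>{u \<in> V. u \<in> fst p}. f p)"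
    by (rule sum.swap_restrict) (simp_all add: assms finite_disjoint_pairs)
  also have "\<dots> = (\<Sum>p\<in>disjoint_pairs V (a + 1) c. of_nat (a + 1) * f p)"
  proof (intro sum.cong refl)
    fix p assume "p \<in> disjoint_pairs V (a + 1) c"
    then have "{u \<in> V. u \<in> fst p} = fst p" "card (fst p) = a + 1"
      by (auto simp: disjoint_pairs_def)
    then show "(\<Sum>u\<in>{u \<in> V. u \<in> fst p}. f p) = of_nat (a + 1) * f p"
      by simp
  qed
  finally show ?thesis
    by (simp add: sum_distrib_left)
qed

lemma sum_disjoint_pairs_insert_snd:
  assumes "finite V"
  shows "(\<Sum>u\<in>V. \<Sum>p\<in>disjoint_pairs (V - {u}) a c. f (fst p, insert u (snd p)))
       = of_nat (c + 1) * (\<Sum>p\<in>disjoint_pairs V a (c + 1). (f p :: 'a::comm_ring_1))"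
  using sum_disjoint_pairs_insert_fst[OF assms, where a = c and c = a and f = "f \<circ> prod.swap"]
  by (simp add: sum_disjoint_pairs_swap[where a = a])

lemma sum_distinct_pairs_monomial_sym_mult_square:
  fixes z :: "'b \<Rightarrow> 'a::comm_ring_1"
  assumes "finite V"
  shows "(\<Sum>u\<in>V. \<Sum>v\<in>V - {u}. monomial_sym (V - {u, v}) a c z * z u ^ 2)
       = of_nat ((card V - 1 - a - c) * (a + 1)) * monomial_sym V (a + 1) c z"
proof -
  have "monomial_sym (V - {u, v}) a c z * z u ^ 2
      = (\<Sum>p\<in>disjoint_pairs (V - {u} - {v}) a c. pair_monomial z (insert u (fst p), snd p))"
    for u v
  proof -
    have "pair_monomial z p * z u ^ 2 = pair_monomial z (insert u (fst p), snd p)"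
      if "p \<in> disjoint_pairs (V - {u} - {v}) a c" for p
    proof -
      have "finite (fst p)" "u \<notin> fst p"
        using that assms by (auto simp: disjoint_pairs_def finite_subset)
      then show ?thesis
        by (simp add: pair_monomial_def ac_simps)
    qed
    then show ?thesis
      by (simp add: monomial_sym_def sum_distrib_right Diff_insert2[symmetric] insert_commute)
  qed
  then have "(\<Sum>u\<in>V. \<Sum>v\<in>V - {u}. monomial_sym (V - {u, v}) a c z * z u ^ 2)
      = (\<Sum>u\<in>V. of_nat (card V - 1 - a - c) *
           (\<Sum>p\<in>disjoint_pairs (V - {u}) a c. pair_monomial z (insert u (fst p), snd p)))"
    using assms by (simp add: sum_disjoint_pairs_remove)
  also have "\<dots> = of_nat (card V - 1 - a - c) *
      (\<Sum>u\<in>V. \<Sum>p\<in>disjoint_pairs (V - {u}) a c. pair_monomial z (insert u (fst p), snd p))"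
    by (simp add: sum_distrib_left)
  also have "\<dots> = of_nat (card V - 1 - a - c) * (of_nat (a + 1) * monomial_sym V (a + 1) c z)"
    by (simp add: sum_disjoint_pairs_insert_fst[OF assms] monomial_sym_def)
  finally show ?thesis
    by (simp only: of_nat_mult mult.assoc)
qed

lemma sum_distinct_pairs_monomial_sym_mult_prod:
  fixes z :: "'b \<Rightarrow> 'a::comm_ring_1"
  assumes "finite V"
  shows "(\<Sum>u\<in>V. \<Sum>v\<in>V - {u}. monomial_sym (V - {u, v}) a c z * (z u * z v))
       = of_nat ((c + 1) * (c + 2)) * monomial_sym V a (c + 2) z"
proof -
  have "monomial_sym (V - {u, v}) a c z * (z u * z v)
      = (\<Sum>p\<in>disjoint_pairs (V - {u} - {v}) a c.
           pair_monomial z (fst p, insert u (insert v (snd p))))"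
    if "v \<in> V - {u}" for u v
  proof -
    have "pair_monomial z p * (z u * z v) = pair_monomial z (fst p, insert u (insert v (snd p)))"
      if "p \<in> disjoint_pairs (V - {u} - {v}) a c" for p
    proof -
      have "finite (snd p)" "v \<notin> snd p" "u \<notin> insert v (snd p)"
        using that assms \<open>v \<in> V - {u}\<close> by (auto simp: disjoint_pairs_def finite_subset)
      then show ?thesis
        by (simp add: pair_monomial_def ac_simps)
    qed
    then show ?thesis
      by (simp add: monomial_sym_def sum_distrib_right Diff_insert2[symmetric] insert_commute)
  qed
  moreover have "(\<Sum>v\<in>V - {u}. \<Sum>p\<in>disjoint_pairs (V - {u} - {v}) a c.
                    pair_monomial z (fst p, insert u (insert v (snd p))))
      = of_nat (c + 1) *
          (\<Sum>p\<in>disjoint_pairs (V - {u}) a (c + 1). pair_monomial z (fst p, insert u (snd p)))" for u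
    using sum_disjoint_pairs_insert_snd[where V = "V - {u}" and f = "\<lambda>p. pair_monomial z (fst p, insert u (snd p))"]
      assms by simp
  ultimately have "(\<Sum>u\<in>V. \<Sum>v\<in>V - {u}. monomial_sym (V - {u, v}) a c z * (z u * z v))
      = (\<Sum>u\<in>V. of_nat (c + 1) *
           (\<Sum>p\<in>disjoint_pairs (V - {u}) a (c + 1). pair_monomial z (fst p, insert u (snd p))))"
    by simp
  also have "\<dots> = of_nat (c + 1) *
      (\<Sum>u\<in>V. \<Sum>p\<in>disjoint_pairs (V - {u}) a (c + 1). pair_monomial z (fst p, insert u (snd p)))"
    by (simp add: sum_distrib_left)
  also have "\<dots> = of_nat (c + 1) * (of_nat (c + 2) * monomial_sym V a (c + 2) z)"
    using sum_disjoint_pairs_insert_snd[OF assms, where c = "c + 1" and f = "pair_monomial z"] by (simp add: monomial_sym_def)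
  finally show ?thesis
    by (simp only: of_nat_mult mult.assoc)
qed

lemma prod_mult_prod_eq_pair_monomial:
  assumes "finite S" "finite T"
  shows "(\<Prod>l\<in>S. z l) * (\<Prod>l\<in>T. z l) = pair_monomial z (S \<inter> T, sym_diff S T)"
proof -
  have "(\<Prod>l\<in>S. z l) = (\<Prod>l\<in>S \<inter> T. z l) * (\<Prod>l\<in>S - T. z l)"
    "(\<Prod>l\<in>T. z l) = (\<Prod>l\<in>S \<inter> T. z l) * (\<Prod>l\<in>T - S. z l)"
    using prod.Int_Diff[OF assms(1), of z T] prod.Int_Diff[OF assms(2), of z S]
    by (simp_all add: Int_commute)
  moreover have "(\<Prod>l\<in>sym_diff S T. z l) = (\<Prod>l\<in>S - T. z l) * (\<Prod>l\<in>T - S. z l)"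
    using assms by (intro prod.union_disjoint) auto
  ultimately show ?thesis
    by (simp add: pair_monomial_def power2_eq_square prod.distrib ac_simps)
qed

lemma meet_symdiff_in_disjoint_pairs:
  assumes "finite V" "S \<subseteq> V" "T \<subseteq> V" "card S = r" "card T = r + k"
  shows "card (S - T) \<le> r \<and>
         (S \<inter> T, sym_diff S T) \<in> disjoint_pairs V (r - card (S - T)) (k + 2 * card (S - T))"
proof -
  have fin: "finite S" "finite T"
    using assms by (auto simp: finite_subset)
  have "card (S \<inter> T) \<le> card S" "card (S \<inter> T) \<le> card T"
    using card_mono[OF fin(1) Int_lower1] card_mono[OF fin(2) Int_lower2] .
  then have "card (S - T) + card (S \<inter> T) = r" "card (T - S) + card (S \<inter> T) = r + k"
    using assms card_Diff_subset_Int[of S T] card_Diff_subset_Int[of T S] fin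
    by (simp_all add: Int_commute)
  moreover have "card (sym_diff S T) = card (S - T) + card (T - S)"
    using fin by (intro card_Un_disjoint) auto
  ultimately show ?thesis
    using assms by (auto simp: disjoint_pairs_def)
qed

lemma card_subset_pairs_with_meet_symdiff:
  assumes "finite V" "i \<le> r" and AC: "(A, C) \<in> disjoint_pairs V (r - i) (k + 2 * i)"
  shows "card {(S, T). S \<subseteq> V \<and> card S = r \<and> T \<subseteq> V \<and> card T = r + k \<and>
                      S \<inter> T = A \<and> sym_diff S T = C} = (k + 2 * i) choose i"
    (is "card ?F = _")
proof -
  have A: "A \<subseteq> V" "C \<subseteq> V" "A \<inter> C = {}" "card A = r - i" "card C = k + 2 * i"
    and fin: "finite A" "finite C"
    using AC assms(1) by (auto simp: disjoint_pairs_def finite_subset)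
  have "bij_betw (\<lambda>B. (A \<union> B, A \<union> (C - B))) {B. B \<subseteq> C \<and> card B = i} ?F"
  proof (rule bij_betw_byWitness[where f' = "\<lambda>(S, T). S - T"])
    show "(\<lambda>B. (A \<union> B, A \<union> (C - B))) ` {B. B \<subseteq> C \<and> card B = i} \<subseteq> ?F"
    proof (rule image_subsetI)
      fix B assume "B \<in> {B. B \<subseteq> C \<and> card B = i}"
      then have B: "B \<subseteq> C" "card B = i"
        by simp_all
      then have "finite B" "card (C - B) = k + i" "A \<inter> B = {}" "A \<inter> (C - B) = {}"
        using fin A by (auto simp: finite_subset card_Diff_subset)
      then have "card (A \<union> B) = r" "card (A \<union> (C - B)) = r + k"
        using fin A B assms(2) by (simp_all add: card_Un_disjoint)
      then show "(\<lambda>B. (A \<union> B, A \<union> (C - B))) B \<in> ?F"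
        using A B by auto
    qed
    show "(\<lambda>(S, T). S - T) ` ?F \<subseteq> {B. B \<subseteq> C \<and> card B = i}"
    proof (rule image_subsetI)
      fix x assume "x \<in> ?F"
      then obtain S T where x: "x = (S, T)" "S \<subseteq> V" "card S = r" "S \<inter> T = A" "sym_diff S T = C"
        by auto
      then have "card (S - T) = card S - card (S \<inter> T)"
        using assms(1) by (intro card_Diff_subset_Int) (auto simp: finite_subset)
      with x A assms(2) show "(\<lambda>(S, T). S - T) x \<in> {B. B \<subseteq> C \<and> card B = i}"
        by auto
    qed
    show "\<forall>B\<in>{B. B \<subseteq> C \<and> card B = i}. (\<lambda>(S, T). S - T) (A \<union> B, A \<union> (C - B)) = B"
      using A by blast
    show "\<forall>x\<in>?F. (\<lambda>B. (A \<union> B, A \<union> (C - B))) ((\<lambda>(S, T). S - T) x) = x"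
      by blast
  qed
  then have "card ?F = card {B. B \<subseteq> C \<and> card B = i}"
    by (simp add: bij_betw_same_card)
  also have "\<dots> = (k + 2 * i) choose i"
    using n_subsets[OF fin(2)] A by simp
  finally show ?thesis .
qed

lemma esym_mult_esym:
  fixes z :: "'b \<Rightarrow> 'a::comm_ring_1"
  assumes "finite V"
  shows "esym V r z * esym V (r + k) z
       = (\<Sum>i = 0..r. of_nat ((k + 2 * i) choose i) * monomial_sym V (r - i) (k + 2 * i) z)"
proof -
  define X where "X = {S. S \<subseteq> V \<and> card S = r} \<times> {T. T \<subseteq> V \<and> card T = r + k}"
  define \<phi> :: "'b set \<times> 'b set \<Rightarrow> 'b set \<times> 'b set"
    where "\<phi> = (\<lambda>(S, T). (S \<inter> T, sym_diff S T))"
  define Y where "Y i = disjoint_pairs V (r - i) (k + 2 * i)" for i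
  have fin_X: "finite X"
    unfolding X_def using assms by (auto intro: finite_subset[of _ "Pow V \<times> Pow V"])
  have \<phi>_X: "\<phi> ` X \<subseteq> (\<Union>i\<in>{0..r}. Y i)"
  proof (rule image_subsetI)
    fix x assume "x \<in> X"
    then obtain S T where "x = (S, T)" "S \<subseteq> V" "T \<subseteq> V" "card S = r" "card T = r + k"
      by (auto simp: X_def)
    with meet_symdiff_in_disjoint_pairs[OF assms, of S T r k] show "\<phi> x \<in> (\<Union>i\<in>{0..r}. Y i)"
      by (auto simp: \<phi>_def Y_def)
  qed
  have "esym V r z * esym V (r + k) z = (\<Sum>(S, T)\<in>X. (\<Prod>l\<in>S. z l) * (\<Prod>l\<in>T. z l))"
    by (simp add: esym_def X_def sum_product sum.cartesian_product)
  also have "\<dots> = (\<Sum>x\<in>X. pair_monomial z (\<phi> x))"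
    using assms
    by (intro sum.cong refl) (auto simp: X_def \<phi>_def finite_subset prod_mult_prod_eq_pair_monomial)
  also have "\<dots> = (\<Sum>y\<in>(\<Union>i\<in>{0..r}. Y i). of_nat (card {x \<in> X. \<phi> x = y}) * pair_monomial z y)"
    using fin_X \<phi>_X assms by (intro sum_comp_eq_sum_card_fibres) (auto simp: Y_def finite_disjoint_pairs)
  also have "\<dots> = (\<Sum>i = 0..r. \<Sum>y\<in>Y i. of_nat (card {x \<in> X. \<phi> x = y}) * pair_monomial z y)"
  proof (rule sum.UNION_disjoint)
    show "\<forall>i\<in>{0..r}. \<forall>j\<in>{0..r}. i \<noteq> j \<longrightarrow> Y i \<inter> Y j = {}"
      by (auto simp: Y_def disjoint_pairs_def)
  qed (simp_all add: Y_def assms finite_disjoint_pairs)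
  also have "\<dots> = (\<Sum>i = 0..r. \<Sum>y\<in>Y i. of_nat ((k + 2 * i) choose i) * pair_monomial z y)"
  proof (intro sum.cong refl)
    fix i y assume "i \<in> {0..r}" "y \<in> Y i"
    moreover obtain A C where "y = (A, C)"
      by fastforce
    moreover have "{x \<in> X. \<phi> x = (A, C)} = {(S, T). S \<subseteq> V \<and> card S = r \<and> T \<subseteq> V \<and>
                     card T = r + k \<and> S \<inter> T = A \<and> sym_diff S T = C}"
      by (auto simp: X_def \<phi>_def)
    ultimately show "of_nat (card {x \<in> X. \<phi> x = y}) * pair_monomial z y
        = of_nat ((k + 2 * i) choose i) * pair_monomial z y"
      using card_subset_pairs_with_meet_symdiff[OF assms] by (simp add: Y_def)
  qed
  finally show ?thesis
    by (simp add: Y_def monomial_sym_def sum_distrib_left)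
qed

lemma sum_distinct_pairs_esym_mult_esym:
  fixes z :: "'b \<Rightarrow> 'a::comm_ring_1"
  assumes "finite V"
  shows "(\<Sum>u\<in>V. \<Sum>v\<in>V - {u}.
            esym (V - {u, v}) r z * esym (V - {u, v}) (r + k) z * (z u ^ 2 - z u * z v))
       = (\<Sum>i = 0..r. of_nat ((k + 2 * i) choose i) * M_reduced V (r - i) (k + 2 * i) z)"
proof -
  define b where "b i = (of_nat ((k + 2 * i) choose i) :: 'a)" for i
  define q where "q u v i = monomial_sym (V - {u, v}) (r - i) (k + 2 * i) z" for u v i
  have "(\<Sum>u\<in>V. \<Sum>v\<in>V - {u}.
            esym (V - {u, v}) r z * esym (V - {u, v}) (r + k) z * (z u ^ 2 - z u * z v))
      = (\<Sum>u\<in>V. \<Sum>v\<in>V - {u}. \<Sum>i = 0..r. b i * (q u v i * z u ^ 2) - b i * (q u v i * (z u * z v)))"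
    using assms
    by (simp add: esym_mult_esym b_def q_def sum_distrib_right right_diff_distrib mult.assoc sum_subtractf)
  also have "\<dots> = (\<Sum>i = 0..r. \<Sum>u\<in>V. \<Sum>v\<in>V - {u}. b i * (q u v i * z u ^ 2) - b i * (q u v i * (z u * z v)))"
    by (subst sum.swap) (simp add: sum.swap[of _ "{0..r}"])
  also have "\<dots> = (\<Sum>i = 0..r. b i * ((\<Sum>u\<in>V. \<Sum>v\<in>V - {u}. q u v i * z u ^ 2)
                                       - (\<Sum>u\<in>V. \<Sum>v\<in>V - {u}. q u v i * (z u * z v))))"
    by (simp add: sum_subtractf sum_distrib_left right_diff_distrib)
  finally show ?thesis
    using assms
    by (simp add: b_def q_def M_reduced_def sum_distinct_pairs_monomial_sym_mult_square
                  sum_distinct_pairs_monomial_sym_mult_prod)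
qed

lemma E_entry_eq_sum_esym:
  fixes z :: "nat \<Rightarrow> 'a::comm_ring_1"
  shows "E_entry n (r + 1) (s + 1) z = of_nat (fact r * fact s) *
     (\<Sum>u\<in>{1..n}. \<Sum>v\<in>{1..n} - {u}.
        esym ({1..n} - {u, v}) r z * esym ({1..n} - {u, v}) s z * (z u ^ 2 - z u * z v))"
proof -
  define h where "h u v = esym ({1..n} - {u, v}) r z * esym ({1..n} - {u, v}) s z" for u v
  define g where "g u v = h u v * (z u ^ 2 - z u * z v)" for u v
  have "E_entry n (r + 1) (s + 1) z
      = of_nat (fact r * fact s) * (\<Sum>u\<in>{1..n}. \<Sum>v\<in>{u<..n}. h u v * (z u - z v) ^ 2)"
    by (simp add: E_entry_def esym_excl_eq_esym h_def)
  also have "(\<Sum>u\<in>{1..n}. \<Sum>v\<in>{u<..n}. h u v * (z u - z v) ^ 2)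
      = (\<Sum>u\<in>{1..n}. \<Sum>v\<in>{v \<in> {1..n}. u < v}. g u v + g v u)"
  proof (intro sum.cong)
    show "{u<..n} = {v \<in> {1..n}. u < v}" if "u \<in> {1..n}" for u
      using that by auto
    show "h u v * (z u - z v) ^ 2 = g u v + g v u" for u v
      by (simp add: g_def h_def insert_commute power2_eq_square algebra_simps)
  qed simp
  also have "\<dots> = (\<Sum>u\<in>{1..n}. \<Sum>v\<in>{1..n} - {u}. g u v)"
    by (simp add: sum_distinct_pairs_eq_sum_less_pairs)
  finally show ?thesis
    by (simp add: g_def h_def)
qed

section \<open>Sums over tuples of distinct indices\<close>

lemma finite_dtuples: "finite (dtuples N n)"
  unfolding dtuples_def
  by (rule finite_subset[OF _ finite_lists_length_eq[of "{1..n}" N]]) auto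

lemma sum_dtuples_take:
  "(\<Sum>bs\<in>dtuples (Suc N) n. f (take N bs)) = of_nat (n - N) * (\<Sum>bs\<in>dtuples N n. (f bs :: 'a::comm_ring_1))"
proof -
  have "(\<Sum>bs\<in>dtuples (Suc N) n. f (take N bs))
      = (\<Sum>ys\<in>dtuples N n. of_nat (card {bs \<in> dtuples (Suc N) n. take N bs = ys}) * f ys)"
    by (intro sum_comp_eq_sum_card_fibres finite_dtuples) (auto simp: dtuples_def dest: in_set_takeD)
  also have "\<dots> = (\<Sum>ys\<in>dtuples N n. of_nat (n - N) * f ys)"
  proof (intro sum.cong refl)
    fix ys assume ys: "ys \<in> dtuples N n"
    have "{bs \<in> dtuples (Suc N) n. take N bs = ys} = (\<lambda>x. ys @ [x]) ` ({1..n} - set ys)"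
    proof safe
      fix bs assume "bs \<in> dtuples (Suc N) n"
      then have bs: "length bs = Suc N" "distinct bs" "set bs \<subseteq> {1..n}"
        by (simp_all add: dtuples_def)
      then have split: "bs = take N bs @ [bs ! N]"
        by (simp add: take_Suc_conv_app_nth[symmetric])
      then have "distinct (take N bs @ [bs ! N])"
        using bs(2) by metis
      moreover have "bs ! N \<in> {1..n}"
        using bs nth_mem[of N bs] by (simp add: subset_iff del: atLeastAtMost_iff)
      ultimately have "bs ! N \<in> {1..n} - set (take N bs)"
        by simp
      with split show "bs \<in> (\<lambda>x. take N bs @ [x]) ` ({1..n} - set (take N bs))"
        by blast
    qed (use ys in \<open>auto simp: dtuples_def\<close>)
    moreover have "card ({1..n} - set ys) = n - N"
      using ys by (simp add: dtuples_def card_Diff_subset distinct_card)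
    ultimately show "of_nat (card {bs \<in> dtuples (Suc N) n. take N bs = ys}) * f ys = of_nat (n - N) * f ys"
      by (simp add: card_image inj_on_def)
  qed
  finally show ?thesis
    by (simp add: sum_distrib_left)
qed

lemma card_dtuples_with_prefix_suffix_sets:
  assumes "y \<in> disjoint_pairs {1..n} a c"
  shows "card {bs \<in> dtuples (a + c) n. (set (take a bs), set (drop a bs)) = y} = fact a * fact c"
    (is "card ?F = _")
proof -
  obtain A C where y: "y = (A, C)"
    by fastforce
  have A: "A \<subseteq> {1..n}" "C \<subseteq> {1..n}" "A \<inter> C = {}" "card A = a" "card C = c"
    and fin: "finite A" "finite C"
    using assms by (auto simp: y disjoint_pairs_def finite_subset)
  have "bij_betw (\<lambda>(xs, ys). xs @ ys) (permutations_of_set A \<times> permutations_of_set C) ?F"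
  proof (rule bij_betw_byWitness[where f' = "\<lambda>bs. (take a bs, drop a bs)"])
    show "\<forall>x\<in>permutations_of_set A \<times> permutations_of_set C.
            (\<lambda>bs. (take a bs, drop a bs)) ((\<lambda>(xs, ys). xs @ ys) x) = x"
      using A by (auto dest: length_finite_permutations_of_set)
    show "\<forall>bs\<in>?F. (\<lambda>(xs, ys). xs @ ys) (take a bs, drop a bs) = bs"
      by simp
    show "(\<lambda>(xs, ys). xs @ ys) ` (permutations_of_set A \<times> permutations_of_set C) \<subseteq> ?F"
    proof (rule image_subsetI)
      fix x assume "x \<in> permutations_of_set A \<times> permutations_of_set C"
      then obtain xs ys where x: "x = (xs, ys)" "xs \<in> permutations_of_set A" "ys \<in> permutations_of_set C"
        by blast
      then have "set xs = A" "distinct xs" "length xs = a" "set ys = C" "distinct ys" "length ys = c"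
        using A by (auto simp: permutations_of_set_def distinct_card[symmetric])
      with A x(1) show "(\<lambda>(xs, ys). xs @ ys) x \<in> ?F"
        by (auto simp: y dtuples_def)
    qed
    show "(\<lambda>bs. (take a bs, drop a bs)) ` ?F \<subseteq> permutations_of_set A \<times> permutations_of_set C"
      by (auto simp: y dtuples_def permutations_of_set_def)
  qed
  then have "card ?F = card (permutations_of_set A \<times> permutations_of_set C)"
    by (simp add: bij_betw_same_card)
  then show ?thesis
    using fin A by (simp add: card_cartesian_product)
qed

lemma sum_dtuples_monomial:
  fixes z :: "nat \<Rightarrow> 'a::comm_ring_1"
  shows "(\<Sum>bs\<in>dtuples (a + c) n. (\<Prod>p<a. z (bs ! p) ^ 2) * (\<Prod>p\<in>{a..<a + c}. z (bs ! p)))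
       = of_nat (fact a * fact c) * monomial_sym {1..n} a c z"
proof -
  define \<phi> where "\<phi> bs = (set (take a bs), set (drop a bs))" for bs :: "nat list"
  have "(\<Prod>p<a. z (bs ! p) ^ 2) * (\<Prod>p\<in>{a..<a + c}. z (bs ! p)) = pair_monomial z (\<phi> bs)"
    if "bs \<in> dtuples (a + c) n" for bs
  proof -
    have bs: "distinct bs" "length bs = a + c"
      using that by (simp_all add: dtuples_def)
    have "(\<Prod>p\<in>{a..<a + c}. z (bs ! p)) = (\<Prod>p<c. z (drop a bs ! p))"
      using bs by (simp add: prod.atLeastLessThan_shift_0[where m = a] atLeast0LessThan)
    also have "\<dots> = (\<Prod>l\<in>set (take c (drop a bs)). z l)"
      using bs by (intro prod_nth_eq_prod_set_take) simp_all
    finally have "(\<Prod>p\<in>{a..<a + c}. z (bs ! p)) = (\<Prod>l\<in>set (drop a bs). z l)"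
      using bs by simp
    moreover have "(\<Prod>p<a. z (bs ! p) ^ 2) = (\<Prod>l\<in>set (take a bs). z l ^ 2)"
      using bs by (intro prod_nth_eq_prod_set_take) simp_all
    ultimately show ?thesis
      by (simp add: pair_monomial_def \<phi>_def)
  qed
  then have "(\<Sum>bs\<in>dtuples (a + c) n. (\<Prod>p<a. z (bs ! p) ^ 2) * (\<Prod>p\<in>{a..<a + c}. z (bs ! p)))
      = (\<Sum>bs\<in>dtuples (a + c) n. pair_monomial z (\<phi> bs))"
    by simp
  also have "\<dots> = (\<Sum>y\<in>disjoint_pairs {1..n} a c.
                    of_nat (card {bs \<in> dtuples (a + c) n. \<phi> bs = y}) * pair_monomial z y)"
  proof (intro sum_comp_eq_sum_card_fibres finite_dtuples finite_disjoint_pairs image_subsetI)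
    fix bs assume "bs \<in> dtuples (a + c) n"
    then show "\<phi> bs \<in> disjoint_pairs {1..n} a c"
      by (auto simp: dtuples_def \<phi>_def disjoint_pairs_def distinct_card set_take_disj_set_drop_if_distinct
               dest: in_set_takeD in_set_dropD)
  qed simp
  also have "\<dots> = (\<Sum>y\<in>disjoint_pairs {1..n} a c. of_nat (fact a * fact c) * pair_monomial z y)"
    by (intro sum.cong refl) (simp only: \<phi>_def card_dtuples_with_prefix_suffix_sets)
  finally show ?thesis
    by (simp add: monomial_sym_def sum_distrib_left)
qed

lemma M_poly_eq_M_reduced:
  fixes z :: "nat \<Rightarrow> 'a::comm_ring_1"
  shows "M_poly (t + 1) c n z = of_nat (fact t * fact c) * M_reduced {1..n} t c z"
proof -
  define w where "w bs = (\<Prod>p<t + 1. z (bs ! p) ^ 2) * (\<Prod>p\<in>{t + 1..<t + 1 + c}. z (bs ! p))"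
    for bs
  have "w bs = w (take (t + 1 + c) bs)" for bs
    by (simp add: w_def)
  then have "(\<Sum>bs\<in>dtuples (c + (t + 1) + 1) n. w bs)
      = of_nat (n - (t + 1 + c)) * (\<Sum>bs\<in>dtuples (t + 1 + c) n. w bs)"
    using sum_dtuples_take[where N = "t + 1 + c" and n = n and f = w] by (simp add: ac_simps)
  also have "\<dots> = of_nat (n - (t + 1 + c)) * (of_nat (fact (t + 1) * fact c) * monomial_sym {1..n} (t + 1) c z)"
    by (simp only: w_def sum_dtuples_monomial)
  finally have "(\<Sum>bs\<in>dtuples (c + (t + 1) + 1) n. w bs)
      = of_nat ((n - 1 - t - c) * (fact (t + 1) * fact c)) * monomial_sym {1..n} (t + 1) c z"
    by (simp only: of_nat_mult diff_diff_left ac_simps)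
  moreover have "(\<Sum>bs\<in>dtuples (c + (t + 1) + 1) n.
                   (\<Prod>p<t + 1 - 1. z (bs ! p) ^ 2) * (\<Prod>p\<in>{t + 1 - 1..<t + 1 + c + 1}. z (bs ! p)))
      = of_nat (fact t * fact (c + 2)) * monomial_sym {1..n} t (c + 2) z"
    using sum_dtuples_monomial[of z t "c + 2" n] by (simp add: ac_simps)
  moreover have "(n - 1 - t - c) * (fact (t + 1) * fact c) = fact t * fact c * ((n - 1 - t - c) * (t + 1))"
    "fact t * fact (c + 2) = fact t * fact c * ((c + 1) * (c + 2))"
    by (simp_all add: distrib_left distrib_right mult_ac)
  ultimately show ?thesis
    unfolding M_poly_def M_reduced_def w_def
    by (simp only: card_atLeastAtMost diff_Suc_1 of_nat_mult right_diff_distrib mult.assoc)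
qed

lemma fact_mult_fact_mult_choose:
  assumes "i \<le> m"
  shows "fact m * fact (m + k) * ((k + 2 * i) choose i)
       = (m choose i) * (fact (m + k) div fact (i + k)) * (fact (m - i) * fact (k + 2 * i))"
proof -
  have central: "fact i * fact (i + k) * ((k + 2 * i) choose i) = (fact (k + 2 * i) :: nat)"
  proof -
    have "k + 2 * i - i = i + k"
      by simp
    then show ?thesis
      using binomial_fact_lemma[of i "k + 2 * i"] by simp
  qed
  have outer: "fact i * fact (m - i) * (m choose i) = (fact m :: nat)"
    using binomial_fact_lemma[OF assms] .
  have quotient: "fact (i + k) * (fact (m + k) div fact (i + k)) = (fact (m + k) :: nat)"
    using assms by (simp add: fact_dvd)
  have "fact m * fact (m + k) * ((k + 2 * i) choose i) * (fact i * fact (i + k))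
      = fact m * fact (m + k) * (fact i * fact (i + k) * ((k + 2 * i) choose i))"
    by (simp only: ac_simps)
  also have "\<dots> = (fact i * fact (m - i) * (m choose i)) * (fact (i + k) * (fact (m + k) div fact (i + k)))
                  * fact (k + 2 * i)"
    by (simp only: central outer quotient)
  also have "\<dots> = (m choose i) * (fact (m + k) div fact (i + k)) * (fact (m - i) * fact (k + 2 * i))
                  * (fact i * fact (i + k))"
    by (simp only: ac_simps)
  finally show ?thesis
    by simp
qed

theorem lemma3p9:
  fixes z :: "nat \<Rightarrow> 'a::comm_ring_1" and n m k :: nat
  assumes "n \<ge> 2"
  shows "E_entry n (m + 1) (m + k + 1) z =
    (\<Sum>i = 0..m. of_nat ((m choose i) * (fact (m + k) div fact (i + k))) *
        M_poly (m + 1 - i) (k + 2 * i) n z)"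
proof -
  \<comment> \<open>The identity holds for every \<open>n\<close>.\<close>
  have "E_entry n (m + 1) (m + k + 1) z
      = (\<Sum>i = 0..m. of_nat (fact m * fact (m + k) * ((k + 2 * i) choose i)) *
                      M_reduced {1..n} (m - i) (k + 2 * i) z)"
    unfolding E_entry_eq_sum_esym sum_distinct_pairs_esym_mult_esym[OF finite_atLeastAtMost]
    by (simp only: sum_distrib_left of_nat_mult mult.assoc)
  also have "\<dots> = (\<Sum>i = 0..m. of_nat ((m choose i) * (fact (m + k) div fact (i + k))) *
                               M_poly (m + 1 - i) (k + 2 * i) n z)"
  proof (intro sum.cong refl)
    fix i assume "i \<in> {0..m}"
    then have "m + 1 - i = m - i + 1"
      and "fact m * fact (m + k) * ((k + 2 * i) choose i)
           = (m choose i) * (fact (m + k) div fact (i + k)) * (fact (m - i) * fact (k + 2 * i))"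
      by (simp_all add: fact_mult_fact_mult_choose)
    then show "of_nat (fact m * fact (m + k) * ((k + 2 * i) choose i)) * M_reduced {1..n} (m - i) (k + 2 * i) z
             = of_nat ((m choose i) * (fact (m + k) div fact (i + k))) * M_poly (m + 1 - i) (k + 2 * i) n z"
      by (simp only: M_poly_eq_M_reduced of_nat_mult mult.assoc)
  qed
  finally show ?thesis .
qed

end
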